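(* Let $c>0$ and let $\nu,\tilde\nu$ be probability measures on $\mathbb R_+$, both different from $\boldsymbol d_0$, and let $\mu$ be the probability measure defined below. Then $$\mu(\{0\})=1-\min\bigl[\,1-\nu(\{0\}),\ c^{-1}(1-\tilde\nu(\{0\}))\,\bigr].$$
   Context: $\mathbb C_+=\{z:\Im z>0\}$, $\boldsymbol d_0$ is the Dirac mass at $0$. For $z\in\mathbb C_+$, the system $\delta = c\int \frac{t}{-z(1+\tilde\delta t)}\nu(dt)$, $\tilde\delta=\int\frac{t}{-z(1+\delta t)}\tilde\nu(dt)$ has a unique solution $(\delta(z),\tilde\delta(z))\in\mathbb C_+^2$, and $m(z)=\int\frac{1}{-z(1+\tilde\delta(z)t)}\nu(dt)$ is the Stieltjes transform $\int\frac{1}{t-z}\mu(dt)$ of a unique probability measure $\mu$ on $\mathbb R_+$. *)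

theory Defs
  imports "HOL-Probability.Probability"
begin

definition C_plus :: "complex set" where
  "C_plus = {z. Im z > 0}"

definition prob_on_Rplus :: "real measure \<Rightarrow> bool" where
  "prob_on_Rplus M \<longleftrightarrow> prob_space M \<and> sets M = sets borel \<and> measure M {..<0} = 0"

definition stieltjes :: "real measure \<Rightarrow> complex \<Rightarrow> complex" where
  "stieltjes M z = (\<integral>t. 1 / (complex_of_real t - z) \<partial>M)"

definition solves_system ::
  "real \<Rightarrow> real measure \<Rightarrow> real measure \<Rightarrow> (complex \<Rightarrow> complex) \<Rightarrow> (complex \<Rightarrow> complex) \<Rightarrow> bool" where
  "solves_system c \<nu> \<nu>' \<delta> \<delta>' \<longleftrightarrow>
     (\<forall>z\<in>C_plus. \<delta> z \<in> C_plus \<and> \<delta>' z \<in> C_plus \<and>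
        \<delta> z = complex_of_real c *
          (\<integral>t. complex_of_real t / (- z * (1 + \<delta>' z * complex_of_real t)) \<partial>\<nu>) \<and>
        \<delta>' z = (\<integral>t. complex_of_real t / (- z * (1 + \<delta> z * complex_of_real t)) \<partial>\<nu>'))"

definition m_fun :: "real measure \<Rightarrow> (complex \<Rightarrow> complex) \<Rightarrow> complex \<Rightarrow> complex" where
  "m_fun \<nu> \<delta>' z = (\<integral>t. 1 / (- z * (1 + \<delta>' z * complex_of_real t)) \<partial>\<nu>)"

end

theory Submission
  imports Defs
begin

text \<open>
  Let \<open>z = \<i> y\<close> with \<open>y \<down> 0\<close>, \<open>u = \<delta>' z\<close>, \<open>v = \<delta> z\<close>, and \<open>F\<^sub>M w = \<integral> 1 / (1 + w t) dM\<close>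
  (\<open>inv_mean\<close>). Then \<open>-z m(z) = F\<^sub>\<nu> u\<close> tends to \<open>\<mu>{0}\<close>, and the system gives the conservation law
  \<open>c (1 - F\<^sub>\<nu> u) = 1 - F\<^bsub>\<nu>'\<^esub> v\<close>, both sides being equal to \<open>-z u v\<close>.
  As \<open>Re (F\<^sub>M w) \<ge> M{0}\<close> for \<open>Re w \<ge> 0\<close>, in the limit \<open>1 - \<mu>{0} \<le> 1 - \<nu>{0}\<close> and
  \<open>c (1 - \<mu>{0}) \<le> 1 - \<nu>'{0}\<close>. If both were strict, \<open>Re (F\<^sub>M w)\<close> would stay a fixed amount
  above \<open>M{0}\<close>; since \<open>F\<^sub>M w \<rightarrow> M{0}\<close> as \<open>|w| \<rightarrow> \<infinity>\<close>, \<open>u\<close> and \<open>v\<close> would stay bounded.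
  But \<open>y Im v = c Re \<integral> t / (1 + u t) d\<nu>\<close>, which for bounded \<open>u\<close> is bounded below by a
  positive constant because \<open>\<nu> \<noteq> \<delta>\<^sub>0\<close>, contradicting \<open>y \<rightarrow> 0\<close>.
\<close>

definition inv_mean :: "real measure \<Rightarrow> complex \<Rightarrow> complex" where
  "inv_mean M w = (\<integral>t. 1 / (1 + w * complex_of_real t) \<partial>M)"

definition frac_mean :: "real measure \<Rightarrow> complex \<Rightarrow> complex" where
  "frac_mean M w = (\<integral>t. complex_of_real t / (1 + w * complex_of_real t) \<partial>M)"

definition tail_mass :: "real measure \<Rightarrow> real \<Rightarrow> real" where
  "tail_mass M r = (\<integral>t. indicator {0<..} t * min 1 (1 / (r * t)) \<partial>M)"

lemma norm_one_plus_mult_ge_1: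
  fixes w :: complex and t :: real
  assumes "Re w \<ge> 0" "t \<ge> 0"
  shows "1 \<le> cmod (1 + w * of_real t)"
proof -
  have "1 \<le> Re (1 + w * of_real t)" using assms by simp
  also have "\<dots> \<le> cmod (1 + w * of_real t)" by (rule complex_Re_le_cmod)
  finally show ?thesis .
qed

lemma norm_one_plus_mult_ge:
  fixes w :: complex and t :: real
  assumes "Re w \<ge> 0" "t \<ge> 0"
  shows "cmod w * t \<le> cmod (1 + w * of_real t)"
proof -
  have "(cmod w * t)^2 = (Re w * t)^2 + (Im w * t)^2"
    by (simp add: cmod_def power_mult_distrib algebra_simps)
  also have "\<dots> \<le> (1 + Re w * t)^2 + (Im w * t)^2"
    using assms by (simp add: power_mono)
  also have "\<dots> = (cmod (1 + w * of_real t))^2"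
    by (simp add: cmod_def)
  finally show ?thesis using assms by (simp add: power2_le_iff_abs_le abs_le_iff)
qed

lemma norm_one_plus_mult_le:
  fixes w :: complex and t :: real
  assumes "t \<ge> 0"
  shows "cmod (1 + w * of_real t) \<le> 1 + cmod w * t"
  using norm_triangle_ineq[of 1 "w * of_real t"] assms by (simp add: norm_mult)

lemma Re_inv_one_plus_mult_le:
  fixes w :: complex and t :: real
  assumes "Re w \<ge> 0" "w \<noteq> 0" "t \<ge> 0"
  shows "Re (1 / (1 + w * of_real t))
           \<le> indicator {0} t + indicator {0<..} t * min 1 (1 / (cmod w * t))"
proof (cases "t = 0")
  case False
  then have "cmod w * t > 0" using assms by simp
  moreover have "Re (1 / (1 + w * of_real t)) \<le> 1 / cmod (1 + w * of_real t)"
    using complex_Re_le_cmod[of "1 / (1 + w * of_real t)"] by (simp add: norm_divide)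
  ultimately show ?thesis
    using False assms norm_one_plus_mult_ge[of w t] norm_one_plus_mult_ge_1[of w t]
    by (auto simp: divide_le_eq field_simps order.trans)
qed simp

lemma Re_frac_one_plus_mult_ge:
  fixes w :: complex and t :: real
  assumes "Re w \<ge> 0" "t \<ge> 0"
  shows "t / (1 + cmod w * t)^2 \<le> Re (of_real t / (1 + w * of_real t))"
proof -
  let ?q = "1 + w * of_real t"
  have "Re ?q \<ge> 1" using assms by simp
  have pos: "(cmod ?q)^2 > 0" using \<open>Re ?q \<ge> 1\<close> by (auto simp: complex_eq_iff)
  have "t / (1 + cmod w * t)^2 \<le> t / (cmod ?q)^2"
  proof (rule divide_left_mono)
    show "(cmod ?q)^2 \<le> (1 + cmod w * t)^2"
      using norm_one_plus_mult_le[of t w] assms by (intro power_mono) auto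
    have "0 < 1 + cmod w * t" using assms by (simp add: add_pos_nonneg)
    then show "0 < (1 + cmod w * t)^2 * (cmod ?q)^2" using pos by simp
  qed (use assms in auto)
  also have "\<dots> \<le> t * Re ?q / (cmod ?q)^2"
    using \<open>Re ?q \<ge> 1\<close> assms pos by (intro divide_right_mono) (auto simp: mult_le_cancel_left1)
  also have "\<dots> = Re (of_real t / ?q)"
    by (simp add: Re_divide cmod_def)
  finally show ?thesis .
qed

lemma Im_frac_one_plus_mult_nonpos:
  fixes w :: complex and t :: real
  assumes "Im w \<ge> 0"
  shows "Im (of_real t / (1 + w * of_real t)) \<le> 0"
proof -
  have "0 \<le> Im w * (t * t)" using assms by simp
  then show ?thesis by (simp add: Im_divide mult.left_commute)
qed

locale rplus_prob_space = prob_space M for M :: "real measure" +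
  assumes sets_eq_borel[measurable_cong]: "sets M = sets borel"
    and measure_neg: "measure M {..<0} = 0"

lemma rplus_prob_spaceI: "prob_on_Rplus M \<Longrightarrow> rplus_prob_space M"
  unfolding prob_on_Rplus_def rplus_prob_space_def rplus_prob_space_axioms_def by auto

context rplus_prob_space
begin

lemma space_eq_UNIV: "space M = UNIV"
  using sets_eq_imp_space_eq[OF sets_eq_borel] by simp

lemma AE_nonneg: "AE t in M. t \<ge> 0"
proof -
  have "{..<0::real} \<in> null_sets M"
    using measure_neg by (auto simp: emeasure_eq_measure)
  from AE_not_in[OF this] show ?thesis by eventually_elim auto
qed

lemma eq_return_0_if_AE_eq_0:
  assumes "AE t in M. t = 0"
  shows "M = return borel 0"
proof (rule measure_eqI)
  show "sets M = sets (return borel 0)" by (simp add: sets_eq_borel)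
  fix A assume "A \<in> sets M"
  then have A: "A \<in> sets borel" by (simp add: sets_eq_borel)
  show "emeasure M A = emeasure (return borel 0) A"
  proof (cases "(0::real) \<in> A")
    case True
    have "emeasure M A = emeasure M (space M)"
      by (rule emeasure_eq_AE) (use assms True A in \<open>auto simp: sets_eq_borel space_eq_UNIV\<close>)
    then show ?thesis using True A by (simp add: emeasure_space_1)
  next
    case False
    have "emeasure M A = emeasure M {}"
      by (rule emeasure_eq_AE) (use assms False A in \<open>auto simp: sets_eq_borel space_eq_UNIV\<close>)
    then show ?thesis using False A by simp
  qed
qed

lemma integrable_inv_one_plus_mult:
  assumes "Re w \<ge> 0"
  shows "integrable M (\<lambda>t. 1 / (1 + w * complex_of_real t))"
proof (rule integrable_const_bound[where B=1])
  show "AE t in M. norm (1 / (1 + w * complex_of_real t)) \<le> 1"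
    using AE_nonneg
    by eventually_elim (use norm_one_plus_mult_ge_1 assms in \<open>auto simp: norm_divide divide_le_eq\<close>)
qed measurable

lemma integrable_frac_one_plus_mult:
  assumes "Re w \<ge> 0" "w \<noteq> 0"
  shows "integrable M (\<lambda>t. complex_of_real t / (1 + w * complex_of_real t))"
proof (rule integrable_const_bound[where B="1 / cmod w"])
  show "AE t in M. norm (complex_of_real t / (1 + w * complex_of_real t)) \<le> 1 / cmod w"
    using AE_nonneg
  proof eventually_elim
    fix t :: real assume t: "0 \<le> t"
    have "cmod w * t \<le> cmod (1 + w * complex_of_real t)"
      by (rule norm_one_plus_mult_ge) (use assms t in auto)
    then show "norm (complex_of_real t / (1 + w * complex_of_real t)) \<le> 1 / cmod w"
      using t assms by (cases "t = 0") (auto simp: norm_divide divide_le_eq field_simps)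
  qed
qed measurable

lemma mult_frac_mean:
  assumes "Re w \<ge> 0"
  shows "w * frac_mean M w = 1 - inv_mean M w"
proof -
  have "w * frac_mean M w = (\<integral>t. w * (complex_of_real t / (1 + w * complex_of_real t)) \<partial>M)"
    unfolding frac_mean_def by (rule integral_mult_right_zero[symmetric])
  also have "\<dots> = (\<integral>t. 1 - 1 / (1 + w * complex_of_real t) \<partial>M)"
  proof (rule integral_cong_AE)
    show "AE t in M. w * (complex_of_real t / (1 + w * complex_of_real t))
                     = 1 - 1 / (1 + w * complex_of_real t)"
      using AE_nonneg
    proof eventually_elim
      fix t :: real assume "0 \<le> t"
      then have "1 + w * complex_of_real t \<noteq> 0"
        using norm_one_plus_mult_ge_1[OF assms] by force
      then show "w * (complex_of_real t / (1 + w * complex_of_real t))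
                 = 1 - 1 / (1 + w * complex_of_real t)"
        by (simp add: field_simps)
    qed
  qed measurable
  also have "\<dots> = 1 - inv_mean M w"
    unfolding inv_mean_def using integrable_inv_one_plus_mult[OF assms]
    by (subst Bochner_Integration.integral_diff) (auto simp: prob_space)
  finally show ?thesis .
qed

lemma measure_0_le_Re_inv_mean:
  assumes "Re w \<ge> 0"
  shows "measure M {0} \<le> Re (inv_mean M w)"
proof -
  have "measure M {0} = (\<integral>t. indicator {0} t \<partial>M)" by (simp add: space_eq_UNIV)
  also have "\<dots> \<le> (\<integral>t. Re (1 / (1 + w * complex_of_real t)) \<partial>M)"
  proof (rule integral_mono_AE)
    show "integrable M (indicator {0::real} :: real \<Rightarrow> real)"
      by (rule integrable_real_indicator) (auto simp: sets_eq_borel less_top[symmetric])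
    show "integrable M (\<lambda>t. Re (1 / (1 + w * complex_of_real t)))"
      using integrable_inv_one_plus_mult[OF assms] by simp
    show "AE t in M. indicator {0} t \<le> Re (1 / (1 + w * complex_of_real t))"
      using AE_nonneg by eventually_elim (use assms in \<open>auto simp: indicator_def Re_divide\<close>)
  qed
  also have "\<dots> = Re (inv_mean M w)"
    unfolding inv_mean_def using integrable_inv_one_plus_mult[OF assms] by simp
  finally show ?thesis .
qed

lemma integrable_tail_mass_integrand:
  assumes "r \<ge> 0"
  shows "integrable M (\<lambda>t. indicator {0<..} t * min 1 (1 / (r * t)) :: real)"
  by (rule integrable_const_bound[where B=1]) (use assms in \<open>auto simp: indicator_def\<close>)

lemma Re_inv_mean_le:
  assumes "Re w \<ge> 0" "w \<noteq> 0"
  shows "Re (inv_mean M w) \<le> measure M {0} + tail_mass M (cmod w)"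
proof -
  have "Re (inv_mean M w) = (\<integral>t. Re (1 / (1 + w * complex_of_real t)) \<partial>M)"
    unfolding inv_mean_def using integrable_inv_one_plus_mult[OF assms(1)] by simp
  also have "\<dots> \<le> (\<integral>t. indicator {0} t + indicator {0<..} t * min 1 (1 / (cmod w * t)) \<partial>M)"
  proof (rule integral_mono_AE)
    show "integrable M (\<lambda>t. Re (1 / (1 + w * complex_of_real t)))"
      using integrable_inv_one_plus_mult[OF assms(1)] by simp
    show "integrable M (\<lambda>t. indicator {0::real} t + indicator {0<..} t * min 1 (1 / (cmod w * t)))"
      using integrable_tail_mass_integrand[of "cmod w"]
      by (intro Bochner_Integration.integrable_add integrable_real_indicator)
         (auto simp: sets_eq_borel less_top[symmetric])
    show "AE t in M. Re (1 / (1 + w * complex_of_real t))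
                     \<le> indicator {0} t + indicator {0<..} t * min 1 (1 / (cmod w * t))"
      using AE_nonneg by eventually_elim (rule Re_inv_one_plus_mult_le[OF assms])
  qed
  also have "\<dots> = measure M {0} + tail_mass M (cmod w)"
    unfolding tail_mass_def using integrable_tail_mass_integrand[of "cmod w"]
    by (subst Bochner_Integration.integral_add) (auto simp: space_eq_UNIV sets_eq_borel less_top[symmetric])
  finally show ?thesis .
qed

lemma Im_frac_mean_nonpos:
  assumes "Im w \<ge> 0"
  shows "Im (frac_mean M w) \<le> 0"
proof (cases "integrable M (\<lambda>t. complex_of_real t / (1 + w * complex_of_real t))")
  case True
  then have "Im (frac_mean M w) = (\<integral>t. Im (complex_of_real t / (1 + w * complex_of_real t)) \<partial>M)"
    unfolding frac_mean_def by simp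
  also have "\<dots> \<le> 0"
    using Bochner_Integration.integral_nonneg[where M=M and f="\<lambda>t. - Im (complex_of_real t / (1 + w * complex_of_real t))"]
      Im_frac_one_plus_mult_nonpos[OF assms] by simp
  finally show ?thesis .
qed (simp add: frac_mean_def not_integrable_integral_eq)

lemma integrable_frac_one_plus_mult_sq:
  assumes "R > 0"
  shows "integrable M (\<lambda>t. t / (1 + R * t)^2)"
proof (rule integrable_const_bound[where B="1 / R"])
  show "AE t in M. norm (t / (1 + R * t)^2) \<le> 1 / R"
    using AE_nonneg
  proof eventually_elim
    fix t :: real assume t: "0 \<le> t"
    have "R * t \<le> (1 + R * t)^2" using t assms by (simp add: power2_eq_square algebra_simps)
    moreover have "0 < 1 + R * t" using t assms by (simp add: add_pos_nonneg)
    ultimately show "norm (t / (1 + R * t)^2) \<le> 1 / R"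
      using t assms by (simp add: divide_le_eq field_simps)
  qed
qed measurable

lemma integral_frac_sq_le_Re_frac_mean:
  assumes "Re w \<ge> 0" "w \<noteq> 0" "cmod w \<le> R"
  shows "(\<integral>t. t / (1 + R * t)^2 \<partial>M) \<le> Re (frac_mean M w)"
proof -
  have "R > 0" using assms by (smt (verit) zero_less_norm_iff)
  have "(\<integral>t. t / (1 + R * t)^2 \<partial>M) \<le> (\<integral>t. Re (complex_of_real t / (1 + w * complex_of_real t)) \<partial>M)"
  proof (rule integral_mono_AE)
    show "integrable M (\<lambda>t. t / (1 + R * t)^2)"
      using \<open>R > 0\<close> by (rule integrable_frac_one_plus_mult_sq)
    show "integrable M (\<lambda>t. Re (complex_of_real t / (1 + w * complex_of_real t)))"
      using integrable_frac_one_plus_mult[OF assms(1,2)] by simp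
    show "AE t in M. t / (1 + R * t)^2 \<le> Re (complex_of_real t / (1 + w * complex_of_real t))"
      using AE_nonneg
    proof eventually_elim
      fix t :: real assume t: "0 \<le> t"
      have "t / (1 + R * t)^2 \<le> t / (1 + cmod w * t)^2"
        using assms t \<open>R > 0\<close>
        by (intro divide_left_mono power_mono mult_pos_pos zero_less_power add_pos_nonneg)
           (auto intro: mult_right_mono)
      also have "\<dots> \<le> Re (complex_of_real t / (1 + w * complex_of_real t))"
        by (rule Re_frac_one_plus_mult_ge) (use assms t in auto)
      finally show "t / (1 + R * t)^2 \<le> Re (complex_of_real t / (1 + w * complex_of_real t))" .
    qed
  qed
  then show ?thesis
    unfolding frac_mean_def using integrable_frac_one_plus_mult[OF assms(1,2)] by simp
qed

lemma integral_frac_sq_pos: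
  assumes "M \<noteq> return borel 0" "R > 0"
  shows "0 < (\<integral>t. t / (1 + R * t)^2 \<partial>M)"
proof -
  have nonneg: "AE t in M. 0 \<le> t / (1 + R * t)^2"
    using AE_nonneg by eventually_elim simp
  have "(\<integral>t. t / (1 + R * t)^2 \<partial>M) \<noteq> 0"
  proof
    assume "(\<integral>t. t / (1 + R * t)^2 \<partial>M) = 0"
    then have "AE t in M. t / (1 + R * t)^2 = 0"
      using integral_nonneg_eq_0_iff_AE[OF integrable_frac_one_plus_mult_sq[OF assms(2)] nonneg]
      by simp
    then have "AE t in M. t = 0"
      using AE_nonneg
    proof eventually_elim
      fix t :: real assume "t / (1 + R * t)^2 = 0" "0 \<le> t"
      moreover have "0 < 1 + R * t" using \<open>0 \<le> t\<close> assms(2) by (simp add: add_pos_nonneg)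
      ultimately show "t = 0" by simp
    qed
    then show False using eq_return_0_if_AE_eq_0 assms(1) by simp
  qed
  then show ?thesis using integral_nonneg_AE[OF nonneg] by simp
qed

lemma tail_mass_tendsto_0: "(tail_mass M \<longlongrightarrow> 0) at_top"
proof -
  have "((\<lambda>r. \<integral>t. indicator {0<..} t * min 1 (1 / (r * t)) \<partial>M) \<longlongrightarrow> (\<integral>t. 0 \<partial>M)) at_top"
  proof (rule integral_dominated_convergence_at_top[where w="\<lambda>_. 1"])
    show "AE t in M. ((\<lambda>r. indicator {0<..} t * min 1 (1 / (r * t))) \<longlongrightarrow> (0::real)) at_top"
    proof (rule AE_I2)
      fix t :: real
      have "((\<lambda>r. indicator {0<..} t * min 1 (inverse r * inverse t)) \<longlongrightarrow>
              indicator {0<..} t * min 1 (0 * inverse t)) at_top"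
        by (intro tendsto_intros tendsto_inverse_0_at_top filterlim_ident)
      then show "((\<lambda>r. indicator {0<..} t * min 1 (1 / (r * t))) \<longlongrightarrow> (0::real)) at_top"
        by (simp add: field_simps indicator_def)
    qed
    show "\<forall>\<^sub>F r in at_top. AE t in M. norm (indicator {0<..} t * min 1 (1 / (r * t)) :: real) \<le> 1"
      using eventually_ge_at_top[of "0::real"]
      by eventually_elim (auto simp: indicator_def)
  qed auto
  then show ?thesis unfolding tail_mass_def[abs_def] by simp
qed

lemma eventually_norm_bounded_if_Re_limit_gt:
  assumes "\<forall>\<^sub>F x in F. Re (w x) \<ge> 0 \<and> w x \<noteq> 0"
    and "((\<lambda>x. inv_mean M (w x)) \<longlongrightarrow> L) F" "measure M {0} < Re L"
  shows "\<exists>N>0. \<forall>\<^sub>F x in F. cmod (w x) < N"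
proof -
  define \<alpha> where "\<alpha> = (Re L - measure M {0}) / 2"
  have "\<alpha> > 0" using assms(3) by (simp add: \<alpha>_def)
  then obtain N where N: "\<And>r. r \<ge> N \<Longrightarrow> tail_mass M r < \<alpha>"
    using order_tendstoD(2)[OF tail_mass_tendsto_0] by (auto simp: eventually_at_top_linorder)
  have "\<forall>\<^sub>F x in F. measure M {0} + \<alpha> < Re (inv_mean M (w x))"
    by (rule order_tendstoD(1)[OF tendsto_Re[OF assms(2)]])
       (use assms(3) in \<open>simp add: \<alpha>_def field_simps\<close>)
  then have "\<forall>\<^sub>F x in F. cmod (w x) < max N 1"
    using assms(1)
  proof eventually_elim
    fix x assume "measure M {0} + \<alpha> < Re (inv_mean M (w x))" "Re (w x) \<ge> 0 \<and> w x \<noteq> 0"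
    then show "cmod (w x) < max N 1"
      using Re_inv_mean_le[of "w x"] N[of "cmod (w x)"] by linarith
  qed
  then show ?thesis by (intro exI[of _ "max N 1"]) auto
qed

lemma measure_0_le_Re_limit:
  assumes "F \<noteq> bot" "\<forall>\<^sub>F x in F. Re (w x) \<ge> 0" "((\<lambda>x. inv_mean M (w x)) \<longlongrightarrow> L) F"
  shows "measure M {0} \<le> Re L"
proof (rule tendsto_lowerbound[OF tendsto_Re[OF assms(3)] _ assms(1)])
  show "\<forall>\<^sub>F x in F. measure M {0} \<le> Re (inv_mean M (w x))"
    using assms(2) by eventually_elim (rule measure_0_le_Re_inv_mean)
qed

lemma stieltjes_tendsto_atom:
  "((\<lambda>y. - (\<i> * of_real y) * stieltjes M (\<i> * of_real y)) \<longlongrightarrow> of_real (measure M {0})) (at_right 0)"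
proof -
  define S where "S s x = - (\<i> * of_real (inverse s)) / (complex_of_real x - \<i> * of_real (inverse s))"
    for s x :: real
  have "((\<lambda>s. integral\<^sup>L M (S s)) \<longlongrightarrow> integral\<^sup>L M (\<lambda>x. complex_of_real (indicator {0} x))) at_top"
  proof (rule integral_dominated_convergence_at_top[where w="\<lambda>_. 1"])
    show "S s \<in> borel_measurable M" for s unfolding S_def by measurable
    show "AE x in M. ((\<lambda>s. S s x) \<longlongrightarrow> complex_of_real (indicator {0} x)) at_top"
    proof (rule AE_I2)
      fix x :: real
      show "((\<lambda>s. S s x) \<longlongrightarrow> complex_of_real (indicator {0} x)) at_top"
      proof (cases "x = 0")
        case True
        have "\<forall>\<^sub>F s in at_top. S s x = 1"
          using eventually_gt_at_top[of "0::real"] by eventually_elim (simp add: S_def True)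
        then show ?thesis using True by (simp add: tendsto_eventually)
      next
        case False
        have "((\<lambda>s. S s x) \<longlongrightarrow> - (\<i> * of_real 0) / (complex_of_real x - \<i> * of_real 0)) at_top"
          unfolding S_def using False
          by (intro tendsto_intros tendsto_inverse_0_at_top filterlim_ident) auto
        then show ?thesis using False by simp
      qed
    qed
    show "\<forall>\<^sub>F s in at_top. AE x in M. norm (S s x) \<le> 1"
      using eventually_gt_at_top[of "0::real"]
    proof eventually_elim
      fix s :: real assume "0 < s"
      have "norm (S s x) \<le> 1" for x
      proof -
        have "inverse s \<le> cmod (complex_of_real x - \<i> * of_real (inverse s))"
          using abs_Im_le_cmod[of "complex_of_real x - \<i> * of_real (inverse s)"] \<open>0 < s\<close>
          by (simp del: of_real_inverse)
        then show ?thesis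
          unfolding S_def using \<open>0 < s\<close> by (simp add: norm_divide norm_mult divide_le_eq del: of_real_inverse)
      qed
      then show "AE x in M. norm (S s x) \<le> 1" by simp
    qed
  qed auto
  moreover have "- (\<i> * of_real (inverse s)) * stieltjes M (\<i> * of_real (inverse s)) = integral\<^sup>L M (S s)"
    for s
    unfolding stieltjes_def S_def by (subst integral_mult_right_zero[symmetric]) simp
  ultimately show ?thesis
    by (simp add: filterlim_at_right_to_top space_eq_UNIV)
qed

end

lemma minus_mult_integral_divide_cancel:
  fixes z :: complex and g h :: "real \<Rightarrow> complex"
  assumes "z \<noteq> 0"
  shows "- z * (\<integral>t. g t / (- z * h t) \<partial>M) = (\<integral>t. g t / h t \<partial>M)"
proof -
  have "- z * (\<integral>t. g t / (- z * h t) \<partial>M) = (\<integral>t. - z * (g t / (- z * h t)) \<partial>M)"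
    by (rule integral_mult_right_zero[symmetric])
  also have "\<dots> = (\<integral>t. g t / h t \<partial>M)"
  proof (intro Bochner_Integration.integral_cong refl)
    fix t
    show "- z * (g t / (- z * h t)) = g t / h t"
      using assms by (cases "h t = 0") (auto simp: field_simps)
  qed
  finally show ?thesis .
qed

lemma m_fun_eq_inv_mean:
  assumes "z \<noteq> 0"
  shows "- z * m_fun \<nu> \<delta>' z = inv_mean \<nu> (\<delta>' z)"
  unfolding m_fun_def inv_mean_def
  using minus_mult_integral_divide_cancel[OF assms, where g="\<lambda>_. 1"] by simp

lemma solves_system_frac_mean:
  assumes "solves_system c \<nu> \<nu>' \<delta> \<delta>'" "z \<in> C_plus"
  shows "- z * \<delta>' z = frac_mean \<nu>' (\<delta> z)"
    and "- z * \<delta> z = of_real c * frac_mean \<nu> (\<delta>' z)"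
proof -
  have "z \<noteq> 0" using assms(2) by (auto simp: C_plus_def)
  have eq_\<delta>: "\<delta> z = of_real c * (\<integral>t. of_real t / (- z * (1 + \<delta>' z * of_real t)) \<partial>\<nu>)"
    and eq_\<delta>': "\<delta>' z = (\<integral>t. of_real t / (- z * (1 + \<delta> z * of_real t)) \<partial>\<nu>')"
    using bspec[OF assms(1)[unfolded solves_system_def] assms(2)] by blast+
  show "- z * \<delta>' z = frac_mean \<nu>' (\<delta> z)"
    unfolding frac_mean_def
    by (subst eq_\<delta>') (rule minus_mult_integral_divide_cancel[OF \<open>z \<noteq> 0\<close>])
  have "- z * \<delta> z = of_real c * (- z * (\<integral>t. of_real t / (- z * (1 + \<delta>' z * of_real t)) \<partial>\<nu>))"
    by (subst eq_\<delta>) (rule mult.left_commute)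
  then show "- z * \<delta> z = of_real c * frac_mean \<nu> (\<delta>' z)"
    unfolding frac_mean_def minus_mult_integral_divide_cancel[OF \<open>z \<noteq> 0\<close>] .
qed

lemma solves_system_imag_axis:
  assumes "prob_on_Rplus \<nu>" "prob_on_Rplus \<nu>'" "c > 0" "solves_system c \<nu> \<nu>' \<delta> \<delta>'" "y > 0"
  defines "u \<equiv> \<delta>' (\<i> * of_real y)" and "v \<equiv> \<delta> (\<i> * of_real y)"
  shows "Re u \<ge> 0 \<and> u \<noteq> 0" and "Re v \<ge> 0 \<and> v \<noteq> 0"
    and "of_real c * (1 - inv_mean \<nu> u) = 1 - inv_mean \<nu>' v"
    and "y * Im v = c * Re (frac_mean \<nu> u)"
proof -
  interpret \<nu>: rplus_prob_space \<nu> by (rule rplus_prob_spaceI[OF assms(1)])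
  interpret \<nu>': rplus_prob_space \<nu>' by (rule rplus_prob_spaceI[OF assms(2)])
  have z: "\<i> * of_real y \<in> C_plus" using assms(5) by (simp add: C_plus_def)
  have "u \<in> C_plus \<and> v \<in> C_plus"
    using bspec[OF assms(4)[unfolded solves_system_def] z] unfolding u_def v_def by blast
  then have Im: "Im u > 0" "Im v > 0" by (auto simp: C_plus_def)
  have eq_u: "- (\<i> * of_real y) * u = frac_mean \<nu>' v"
    and eq_v: "- (\<i> * of_real y) * v = of_real c * frac_mean \<nu> u"
    using solves_system_frac_mean[OF assms(4) z] by (simp_all add: u_def v_def)
  have "- y * Re u = Im (frac_mean \<nu>' v)" using arg_cong[OF eq_u, of Im] by simp
  with \<nu>'.Im_frac_mean_nonpos[of v] Im have "0 \<le> y * Re u" by simp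
  with assms(5) have "Re u \<ge> 0" by (simp add: zero_le_mult_iff)
  moreover have "- y * Re v = c * Im (frac_mean \<nu> u)" using arg_cong[OF eq_v, of Im] by simp
  with mult_nonneg_nonpos[of c "Im (frac_mean \<nu> u)"] \<nu>.Im_frac_mean_nonpos[of u] Im assms(3)
  have "0 \<le> y * Re v" by simp
  with assms(5) have "Re v \<ge> 0" by (simp add: zero_le_mult_iff)
  ultimately show "Re u \<ge> 0 \<and> u \<noteq> 0" "Re v \<ge> 0 \<and> v \<noteq> 0" using Im by auto
  have "of_real c * (1 - inv_mean \<nu> u) = u * (of_real c * frac_mean \<nu> u)"
    using \<nu>.mult_frac_mean[OF \<open>Re u \<ge> 0\<close>] by (metis mult.left_commute)
  also have "\<dots> = v * (- (\<i> * of_real y) * u)" by (simp add: eq_v[symmetric])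
  also have "\<dots> = 1 - inv_mean \<nu>' v" by (simp only: eq_u \<nu>'.mult_frac_mean[OF \<open>Re v \<ge> 0\<close>])
  finally show "of_real c * (1 - inv_mean \<nu> u) = 1 - inv_mean \<nu>' v" .
  show "y * Im v = c * Re (frac_mean \<nu> u)" using arg_cong[OF eq_v, of Re] by simp
qed

lemma atom_gap_alternative:
  assumes "prob_on_Rplus \<nu>" "prob_on_Rplus \<nu>'" "\<nu> \<noteq> return borel 0"
    and "c > 0" "solves_system c \<nu> \<nu>' \<delta> \<delta>'"
    and lim: "((\<lambda>y. inv_mean \<nu> (\<delta>' (\<i> * of_real y))) \<longlongrightarrow> L) (at_right 0)"
    and lim': "((\<lambda>y. inv_mean \<nu>' (\<delta> (\<i> * of_real y))) \<longlongrightarrow> L') (at_right 0)"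
  shows "Re L \<le> measure \<nu> {0} \<or> Re L' \<le> measure \<nu>' {0}"
proof (rule ccontr)
  interpret \<nu>: rplus_prob_space \<nu> by (rule rplus_prob_spaceI[OF assms(1)])
  interpret \<nu>': rplus_prob_space \<nu>' by (rule rplus_prob_spaceI[OF assms(2)])
  define u where "u y = \<delta>' (\<i> * of_real y)" for y :: real
  define v where "v y = \<delta> (\<i> * of_real y)" for y :: real
  note axis = solves_system_imag_axis[OF assms(1,2,4,5)]
  have pos: "\<forall>\<^sub>F y in at_right 0. y > (0::real)" by (rule eventually_at_right_less)
  assume "\<not> ?thesis"
  then have gap: "measure \<nu> {0} < Re L" "measure \<nu>' {0} < Re L'" by auto
  \<comment> \<open>Both gaps bound the solution on the imaginary axis near \<open>0\<close>.\<close>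
  have "\<forall>\<^sub>F y in at_right 0. 0 \<le> Re (u y) \<and> u y \<noteq> 0"
    and "((\<lambda>y. inv_mean \<nu> (u y)) \<longlongrightarrow> L) (at_right 0)"
    using pos lim by (auto simp: u_def axis(1) elim: eventually_mono)
  from \<nu>.eventually_norm_bounded_if_Re_limit_gt[OF this gap(1)]
  obtain N1 where "N1 > 0" and bound_u: "\<forall>\<^sub>F y in at_right 0. cmod (u y) < N1" by blast
  have "\<forall>\<^sub>F y in at_right 0. 0 \<le> Re (v y) \<and> v y \<noteq> 0"
    and "((\<lambda>y. inv_mean \<nu>' (v y)) \<longlongrightarrow> L') (at_right 0)"
    using pos lim' by (auto simp: v_def axis(2) elim: eventually_mono)
  from \<nu>'.eventually_norm_bounded_if_Re_limit_gt[OF this gap(2)]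
  obtain N2 where bound_v: "\<forall>\<^sub>F y in at_right 0. cmod (v y) < N2" by blast
  define \<kappa> where "\<kappa> = (\<integral>t. t / (1 + N1 * t)^2 \<partial>\<nu>)"
  have "\<kappa> > 0" unfolding \<kappa>_def by (rule \<nu>.integral_frac_sq_pos[OF assms(3) \<open>N1 > 0\<close>])
  \<comment> \<open>But then \<open>y Im v\<close> would stay bounded below by \<open>c \<kappa>\<close> while tending to \<open>0\<close>.\<close>
  have "\<forall>\<^sub>F y in at_right 0. c * \<kappa> < y * N2"
    using pos bound_u bound_v
  proof eventually_elim
    fix y :: real assume y: "0 < y" "cmod (u y) < N1" "cmod (v y) < N2"
    have "c * \<kappa> \<le> c * Re (frac_mean \<nu> (u y))"
      using \<nu>.integral_frac_sq_le_Re_frac_mean[of "u y" N1] axis(1)[OF y(1)] y(2) assms(4)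
      unfolding \<kappa>_def u_def by simp
    also have "\<dots> = y * Im (v y)" using axis(4)[OF y(1)] by (simp add: u_def v_def)
    also have "\<dots> \<le> y * cmod (v y)"
      using y(1) abs_Im_le_cmod[of "v y"] by (intro mult_left_mono) auto
    also have "\<dots> < y * N2" using y by simp
    finally show "c * \<kappa> < y * N2" .
  qed
  moreover have "\<forall>\<^sub>F y in at_right 0. y * N2 < c * \<kappa>"
  proof (rule order_tendstoD(2))
    show "((\<lambda>y. y * N2) \<longlongrightarrow> 0 * N2) (at_right 0)" by (intro tendsto_intros)
    show "0 * N2 < c * \<kappa>" using \<open>\<kappa> > 0\<close> assms(4) by simp
  qed
  ultimately have "\<forall>\<^sub>F y in at_right (0::real). False" by eventually_elim simp
  then show False by simp
qed

lemma eq_one_minus_min_if_bounds: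
  fixes c m n1 n2 :: real
  assumes "c > 0" "n1 \<le> m" "n2 \<le> 1 - c * (1 - m)" "m \<le> n1 \<or> 1 - c * (1 - m) \<le> n2"
  shows "m = 1 - min (1 - n1) ((1 - n2) / c)"
proof -
  have "1 - m \<le> (1 - n2) / c" using assms(1,3) by (simp add: le_divide_eq algebra_simps)
  moreover have "1 - m = 1 - n1 \<or> 1 - m = (1 - n2) / c"
    using assms by (auto simp: eq_divide_eq algebra_simps)
  ultimately show ?thesis using assms(2) by (auto simp: min_def)
qed

lemma tendsto_inv_mean_atom:
  assumes "prob_on_Rplus \<mu>" "\<forall>z\<in>C_plus. m_fun \<nu> \<delta>' z = stieltjes \<mu> z"
  shows "((\<lambda>y. inv_mean \<nu> (\<delta>' (\<i> * of_real y))) \<longlongrightarrow> of_real (measure \<mu> {0})) (at_right 0)"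
proof (rule Lim_transform_eventually[OF rplus_prob_space.stieltjes_tendsto_atom])
  show "rplus_prob_space \<mu>" by (rule rplus_prob_spaceI[OF assms(1)])
  show "\<forall>\<^sub>F y in at_right 0.
          - (\<i> * of_real y) * stieltjes \<mu> (\<i> * of_real y) = inv_mean \<nu> (\<delta>' (\<i> * of_real y))"
    using eventually_at_right_less[of 0]
  proof eventually_elim
    fix y :: real assume "y > 0"
    then have "\<i> * of_real y \<in> C_plus" "\<i> * of_real y \<noteq> 0" by (simp_all add: C_plus_def)
    then show "- (\<i> * of_real y) * stieltjes \<mu> (\<i> * of_real y) = inv_mean \<nu> (\<delta>' (\<i> * of_real y))"
      using assms(2) m_fun_eq_inv_mean by metis
  qed
qed

lemma tendsto_inv_mean_conserved:
  assumes "prob_on_Rplus \<nu>" "prob_on_Rplus \<nu>'" "c > 0" "solves_system c \<nu> \<nu>' \<delta> \<delta>'"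
    and "((\<lambda>y. inv_mean \<nu> (\<delta>' (\<i> * of_real y))) \<longlongrightarrow> L) (at_right 0)"
  shows "((\<lambda>y. inv_mean \<nu>' (\<delta> (\<i> * of_real y))) \<longlongrightarrow> 1 - of_real c * (1 - L)) (at_right 0)"
proof (rule Lim_transform_eventually)
  show "((\<lambda>y. 1 - of_real c * (1 - inv_mean \<nu> (\<delta>' (\<i> * of_real y)))) \<longlongrightarrow> 1 - of_real c * (1 - L))
          (at_right 0)"
    by (intro tendsto_intros assms(5))
  show "\<forall>\<^sub>F y in at_right 0.
          1 - of_real c * (1 - inv_mean \<nu> (\<delta>' (\<i> * of_real y))) = inv_mean \<nu>' (\<delta> (\<i> * of_real y))"
    using eventually_at_right_less[of 0]
    by eventually_elim (simp add: solves_system_imag_axis(3)[OF assms(1-4)])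
qed

theorem proposition2p2:
  fixes c :: real and \<nu> \<nu>' \<mu> :: "real measure" and \<delta> \<delta>' :: "complex \<Rightarrow> complex"
  assumes "c > 0"
    and "prob_on_Rplus \<nu>" and "prob_on_Rplus \<nu>'"
    and "\<nu> \<noteq> return borel 0" and "\<nu>' \<noteq> return borel 0"
    and "solves_system c \<nu> \<nu>' \<delta> \<delta>'"
    and "prob_on_Rplus \<mu>"
    and "\<forall>z\<in>C_plus. m_fun \<nu> \<delta>' z = stieltjes \<mu> z"
  shows "measure \<mu> {0} = 1 - min (1 - measure \<nu> {0}) ((1 - measure \<nu>' {0}) / c)"
proof -
  let ?m = "measure \<mu> {0}"
  note axis = solves_system_imag_axis[OF assms(2,3,1,6)]
  have pos: "\<forall>\<^sub>F y in at_right 0. y > (0::real)" by (rule eventually_at_right_less)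
  have lim: "((\<lambda>y. inv_mean \<nu> (\<delta>' (\<i> * of_real y))) \<longlongrightarrow> of_real ?m) (at_right 0)"
    by (rule tendsto_inv_mean_atom[OF assms(7,8)])
  have lim': "((\<lambda>y. inv_mean \<nu>' (\<delta> (\<i> * of_real y))) \<longlongrightarrow> 1 - of_real c * (1 - of_real ?m)) (at_right 0)"
    by (rule tendsto_inv_mean_conserved[OF assms(2,3,1,6) lim])
  have "measure \<nu> {0} \<le> Re (of_real ?m)"
    by (rule rplus_prob_space.measure_0_le_Re_limit[OF rplus_prob_spaceI[OF assms(2)] _ _ lim])
       (use pos axis(1) in \<open>auto elim: eventually_mono\<close>)
  moreover have "measure \<nu>' {0} \<le> Re (1 - of_real c * (1 - of_real ?m))"
    by (rule rplus_prob_space.measure_0_le_Re_limit[OF rplus_prob_spaceI[OF assms(3)] _ _ lim'])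
       (use pos axis(2) in \<open>auto elim: eventually_mono\<close>)
  moreover have "?m \<le> measure \<nu> {0} \<or> 1 - c * (1 - ?m) \<le> measure \<nu>' {0}"
    using atom_gap_alternative[OF assms(2,3,4,1,6) lim lim'] by simp
  ultimately show ?thesis by (intro eq_one_minus_min_if_bounds[OF assms(1)]) simp_all
qed

end
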